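(* Consider the repeated service game described in the context, with $t>0$, $\tau\in(0,t)$, $c>0$, $d\in(0,1)$, $w\in(0,1)$, and a strictly decreasing utility $\Gamma:[0,1]\to(0,\infty)$. Suppose the price $p$ satisfies $$p=\Gamma(d)\left(1-\frac{\tau}{t}\right)+\frac{c}{1-d}\,\frac{\tau}{t}.$$ Then the cooperation conditions hold if and only if $$w\ \ge\ \frac{c}{(1-d)\Gamma(d)}.$$
   Context: A service provider (SP) and a client interact in rounds of duration $t>0$. The parameters are: trial time $\tau$, SP cost per unit time $c$, price per unit time $p$, channel outage probability $d$, continuation probability (cooperation willingness) $w$, and a client utility function $\Gamma$. When both players use COOP, the long-term payoffs are $$\Pi_s^{\mathrm C}=\frac{(1-d)(p-c)t-dc\tau}{1-(1-d)w},\qquad \Pi_c^{\mathrm C}=\frac{(1-d)(\Gamma(d)-p)t+d\Gamma(d)\tau}{1-(1-d)w}.$$ For an integer $j\ge 2$, the long-term payoff of a player using the defect-and-recover-after-$j$-rounds strategy JDEF$_j$ against COOP is: - for the SP, $$\Pi_s^{(j)}=\frac{(1-d)\big(pt-c\tau-w^{j-1}c(t-\tau)\big)-dc\tau}{1-(1-d)w^{j}};$$ - for the client, $$\Pi_c^{(j)}=\frac{(1-d)\big(\Gamma(d)\tau+w^{j-1}(\Gamma(d)(t-\tau)-pt)\big)+d\Gamma(d)\tau}{1-(1-d)w^{j}}.$$ The cooperation conditions hold when both of the following hold: - $\Pi_s^{\mathrm C}\ge\Pi_s^{(j)}$ for all integers $j\ge2$; - $\Pi_c^{\mathrm C}\ge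 \Pi_c^{(j)}$ for all integers $j\ge 2$. *)

theory Defs
  imports Complex_Main
begin

text \<open>Parameters:
  t round duration, tau trial time, c SP cost, p price, d outage probability,
  w continuation probability, G the client utility function (Gamma).\<close>

definition Pi_s_C :: "real \<Rightarrow> real \<Rightarrow> real \<Rightarrow> real \<Rightarrow> real \<Rightarrow> real \<Rightarrow> real" where
  "Pi_s_C t tau c p d w = ((1 - d) * (p - c) * t - d * c * tau) / (1 - (1 - d) * w)"

definition Pi_c_C :: "real \<Rightarrow> real \<Rightarrow> (real \<Rightarrow> real) \<Rightarrow> real \<Rightarrow> real \<Rightarrow> real \<Rightarrow> real" where
  "Pi_c_C t tau G p d w = ((1 - d) * (G d - p) * t + d * G d * tau) / (1 - (1 - d) * w)"

definition Pi_s_J :: "nat \<Rightarrow> real \<Rightarrow> real \<Rightarrow> real \<Rightarrow> real \<Rightarrow> real \<Rightarrow> real \<Rightarrow> real" where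
  "Pi_s_J j t tau c p d w =
     ((1 - d) * (p * t - c * tau - w ^ (j - 1) * c * (t - tau)) - d * c * tau)
     / (1 - (1 - d) * w ^ j)"

definition Pi_c_J :: "nat \<Rightarrow> real \<Rightarrow> real \<Rightarrow> (real \<Rightarrow> real) \<Rightarrow> real \<Rightarrow> real \<Rightarrow> real \<Rightarrow> real" where
  "Pi_c_J j t tau G p d w =
     ((1 - d) * (G d * tau + w ^ (j - 1) * (G d * (t - tau) - p * t)) + d * G d * tau)
     / (1 - (1 - d) * w ^ j)"

definition cooperation_conditions ::
  "real \<Rightarrow> real \<Rightarrow> real \<Rightarrow> real \<Rightarrow> real \<Rightarrow> real \<Rightarrow> (real \<Rightarrow> real) \<Rightarrow> bool" where
  "cooperation_conditions t tau c p d w G \<longleftrightarrow>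
     (\<forall>j::nat. j \<ge> 2 \<longrightarrow> Pi_s_C t tau c p d w \<ge> Pi_s_J j t tau c p d w) \<and>
     (\<forall>j::nat. j \<ge> 2 \<longrightarrow> Pi_c_C t tau G p d w \<ge> Pi_c_J j t tau G p d w)"

end

theory Submission
  imports Defs
begin

text \<open>Write \<open>e = 1 - d\<close> and \<open>g = \<Gamma>(d)\<close>. The chosen price makes \<open>e p t = e g (t - \<tau>) + c \<tau>\<close>,
  and with it every payoff becomes a positive constant (\<open>e (t - \<tau>)\<close> for the SP, \<open>\<tau>\<close> for the
  client) times \<open>(g - q c) / (1 - e w q)\<close>, where \<open>q = 1\<close> for COOP and \<open>q = w\<^sup>j\<^sup>-\<^sup>1 < 1\<close> for
  JDEF\<open>\<^sub>j\<close>. Cross-multiplying, the deviation value is at most the cooperation value iff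
  \<open>(1 - q) c \<le> (1 - q) g e w\<close>, i.e. iff \<open>c \<le> g e w\<close>: the same condition for both players and
  every \<open>j\<close>.\<close>

definition payoff_ratio :: "real \<Rightarrow> real \<Rightarrow> real \<Rightarrow> real \<Rightarrow> real" where
  "payoff_ratio g c a q = (g - q * c) / (1 - a * q)"

lemma payoff_ratio_le_one_iff:
  fixes g c a q :: real
  assumes "a < 1" and "0 \<le> q" and "q < 1"
  shows "payoff_ratio g c a q \<le> payoff_ratio g c a 1 \<longleftrightarrow> c \<le> g * a"
proof -
  have "a * q < 1"
    using assms by (cases "a \<le> 0") (auto intro: order.strict_trans1[OF mult_nonpos_nonneg]
        order.strict_trans1[OF mult_left_le_one_le])
  then have "payoff_ratio g c a q \<le> payoff_ratio g c a 1 \<longleftrightarrow>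
      (g - q * c) * (1 - a) \<le> (g - c) * (1 - a * q)"
    using assms(1) by (simp add: payoff_ratio_def divide_simps)
  also have "\<dots> \<longleftrightarrow> (1 - q) * c \<le> (1 - q) * (g * a)"
    by (simp add: algebra_simps)
  also have "\<dots> \<longleftrightarrow> c \<le> g * a"
    using assms(3) by simp
  finally show ?thesis .
qed

lemma price_identity:
  fixes t tau c p d g :: real
  assumes "t \<noteq> 0" and "d \<noteq> 1"
    and "p = g * (1 - tau / t) + c / (1 - d) * (tau / t)"
  shows "(1 - d) * p * t = (1 - d) * g * (t - tau) + c * tau"
proof -
  have "(1 - d) * p = (1 - d) * g * (1 - tau / t) + c * (tau / t)"
    using assms(2,3) by (simp add: distrib_left)
  then show ?thesis
    using assms(1) by (simp add: field_simps)
qed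

context
  fixes t tau c p d w :: real and G :: "real \<Rightarrow> real"
  assumes price: "(1 - d) * p * t = (1 - d) * G d * (t - tau) + c * tau"
begin

lemma Pi_s_C_eq_payoff_ratio:
  "Pi_s_C t tau c p d w = (1 - d) * (t - tau) * payoff_ratio (G d) c ((1 - d) * w) 1"
  unfolding Pi_s_C_def payoff_ratio_def using price by (simp add: algebra_simps)

lemma Pi_c_C_eq_payoff_ratio:
  "Pi_c_C t tau G p d w = tau * payoff_ratio (G d) c ((1 - d) * w) 1"
  unfolding Pi_c_C_def payoff_ratio_def using price by (simp add: algebra_simps)

lemma Pi_s_J_eq_payoff_ratio:
  assumes "j \<ge> 1"
  shows "Pi_s_J j t tau c p d w = (1 - d) * (t - tau) * payoff_ratio (G d) c ((1 - d) * w) (w ^ (j - 1))"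
proof -
  have "w ^ j = w * w ^ (j - 1)"
    using assms by (simp flip: power_Suc)
  moreover have "(1 - d) * (p * t - c * tau - w ^ (j - 1) * c * (t - tau)) - d * c * tau
      = (1 - d) * (t - tau) * (G d - w ^ (j - 1) * c)"
    using price by (simp add: algebra_simps)
  ultimately show ?thesis
    unfolding Pi_s_J_def payoff_ratio_def by (simp add: mult.assoc)
qed

lemma Pi_c_J_eq_payoff_ratio:
  assumes "j \<ge> 1"
  shows "Pi_c_J j t tau G p d w = tau * payoff_ratio (G d) c ((1 - d) * w) (w ^ (j - 1))"
proof -
  have "w ^ j = w * w ^ (j - 1)"
    using assms by (simp flip: power_Suc)
  moreover have "(1 - d) * (G d * tau + w ^ (j - 1) * (G d * (t - tau) - p * t)) + d * G d * tau
      = tau * (G d - w ^ (j - 1) * c)"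
    using arg_cong[OF price, of "\<lambda>x. x * w ^ (j - 1)"] by (simp add: algebra_simps)
  ultimately show ?thesis
    unfolding Pi_c_J_def payoff_ratio_def by (simp add: mult.assoc)
qed

end

theorem corollary4:
  fixes t tau c p d w :: real and G :: "real \<Rightarrow> real"
  assumes "t > 0" and "0 < tau" and "tau < t" and "c > 0"
    and "0 < d" and "d < 1" and "0 < w" and "w < 1"
    and "\<forall>x\<in>{0..1}. G x > 0"
    and "\<forall>x\<in>{0..1}. \<forall>y\<in>{0..1}. x < y \<longrightarrow> G y < G x"
    and "p = G d * (1 - tau / t) + c / (1 - d) * (tau / t)"
  shows "cooperation_conditions t tau c p d w G \<longleftrightarrow> w \<ge> c / ((1 - d) * G d)"
proof -
  let ?r = "payoff_ratio (G d) c ((1 - d) * w)"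
  have price: "(1 - d) * p * t = (1 - d) * G d * (t - tau) + c * tau"
    using price_identity assms(1,6,11) by simp
  have "(1 - d) * w < 1"
    using assms(5-8) mult_left_le_one_le[of w "1 - d"] by linarith
  then have ratio: "?r (w ^ (j - 1)) \<le> ?r 1 \<longleftrightarrow> c \<le> G d * ((1 - d) * w)" if "j \<ge> 2" for j :: nat
    using payoff_ratio_le_one_iff that assms(7,8) by (simp add: power_less_one_iff)
  have "cooperation_conditions t tau c p d w G \<longleftrightarrow> (\<forall>j::nat. j \<ge> 2 \<longrightarrow> c \<le> G d * ((1 - d) * w))"
    using assms(2,3,6) ratio
    by (simp add: cooperation_conditions_def Pi_s_C_eq_payoff_ratio[where G = G, OF price] Pi_c_C_eq_payoff_ratio[where G = G, OF price]
        Pi_s_J_eq_payoff_ratio[where G = G, OF price] Pi_c_J_eq_payoff_ratio[where G = G, OF price])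
  also have "\<dots> \<longleftrightarrow> c \<le> G d * ((1 - d) * w)"
    by auto
  also have "\<dots> \<longleftrightarrow> w \<ge> c / ((1 - d) * G d)"
    using assms(5,6,9) by (simp add: field_simps)
  finally show ?thesis .
qed

end
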